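(* In the setting of the context, let $\{\tilde x_i^k\}_{k\ge0}\subset\mathbb{R}^d$ ($i\in[m]$) be arbitrary. Let $\alpha^k\in(0,1)$ satisfy $(\alpha^{k+1})^2=(1-\alpha^{k+1})(\alpha^k)^2+\alpha^{k+1}\mu_M/\delta$ for all $k\ge0$, and let $\zeta^0:=\frac{\delta(\alpha^0)^2-\alpha^0\mu_M}{1-\alpha^0}>0$ (so that $\zeta^{k+1}=\delta(\alpha^k)^2$ for all $k$). Let $\psi_i^k$, $\zeta^k$, $v_i^k$, $\psi_i^{k,\star}$ be as in the canonical-form recursion with (i) $\psi_i^{0,\star}=M(\tilde x_i^0)$ and $v_i^0=\tilde x_i^0$; (ii) $\tilde z_i^0=\tilde x_i^0$ and $\tilde z_i^{k+1}=\tilde x_i^{k+1}+\frac{\alpha^k(1-\alpha^k)}{(\alpha^k)^2+\alpha^{k+1}}(\tilde x_i^{k+1}-\tilde x_i^k)$; (iii) $e_i^k:=\delta(\tilde z_i^k-\tilde x_i^{k+1})-\nabla M(\tilde z_i^k)$. Define $\epsilon_{\psi,i}^0:=0$ and $$\epsilon_{\psi,i}^{k+1}:=(1-\alpha^k)\epsilon_{\psi,i}^k+(1-\alpha^k)\langle e_i^k,\tilde x_i^k-\tilde z_i^k\rangle+\Big\langle e_i^k+\nabla M(\tilde z_i^k),\frac1\delta e_i^k\Big\rangle.$$ Then for all $k\ge0$ and $i\in[m]$, $M(\tilde x_i^k)\le\psi_i^{k,\star}+\epsilon_{\psi,i}^k$.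
   Context: $u=f+r$ on $\mathbb{R}^d$, $f=\frac1m\sum_if_i$ with $f_i$ continuously differentiable convex, $f$ $\mu$-strongly convex ($\mu\ge0$) and $L$-smooth, $r$ proper closed convex. Fix $\delta>0$. $M(x):=\min_y\{u(y)+\frac\delta2\|y-x\|^2\}$ (Moreau envelope; differentiable, convex, $\delta$-smooth), $\mu_M:=\delta\mu/(\delta+\mu)$. Canonical-form recursion: $\psi_i^0(x)=\psi_i^{0,\star}+\frac{\zeta^0}2\|x-v_i^0\|^2$ and $\psi_i^{k+1}(x)=(1-\alpha^k)\psi_i^k(x)+\alpha^k\big(M(\tilde z_i^k)+\langle\nabla M(\tilde z_i^k)+e_i^k,x-\tilde z_i^k\rangle+\frac{\mu_M}2\|x-\tilde z_i^k\|^2\big)$; then $\psi_i^k(x)=\psi_i^{k,\star}+\frac{\zeta^k}2\|x-v_i^k\|^2$ with $\zeta^{k+1}=(1-\alpha^k)\zeta^k+\alpha^k\mu_M$, $v_i^{k+1}=\frac{(1-\alpha^k)\zeta^k}{\zeta^{k+1}}v_i^k+\frac{\alpha^k\mu_M}{\zeta^{k+1}}\tilde z_i^k-\frac{\alpha^k}{\zeta^{k+1}}(\nabla M(\tilde z_i^k)+e_i^k)$, and $\psi_i^{k+1,\star}=(1-\alpha^k)\psi_i^{k,\star}+\alpha^kM(\tilde z_i^k)-\frac{(\alpha^k)^2}{2\zeta^{k+1}}\|\nabla M(\tilde z_i^k)+e_i^k\|^2+\frac{\alpha^k(1-\alpha^k)\zeta^k}{\zeta^{k+1}}\big(\langle\nabla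 M(\tilde z_i^k)+e_i^k,v_i^k-\tilde z_i^k\rangle+\frac{\mu_M}2\|\tilde z_i^k-v_i^k\|^2\big)$, where $\psi_i^{k,\star}=\min_x\psi_i^k(x)$. *)

theory Defs
  imports "HOL-Analysis.Analysis"
begin

definition grad :: "('a::euclidean_space \<Rightarrow> real) \<Rightarrow> 'a \<Rightarrow> 'a" where
  "grad F x = (SOME g. GDERIV F x :> g)"

definition strongly_convex :: "real \<Rightarrow> ('a::euclidean_space \<Rightarrow> real) \<Rightarrow> bool" where
  "strongly_convex \<mu> F \<longleftrightarrow>
     (\<forall>x y t. 0 \<le> t \<and> t \<le> 1 \<longrightarrow>
        F ((1 - t) *\<^sub>R x + t *\<^sub>R y) \<le> (1 - t) * F x + t * F y - \<mu> / 2 * t * (1 - t) * (norm (x - y))\<^sup>2)"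

definition L_smooth :: "real \<Rightarrow> ('a::euclidean_space \<Rightarrow> real) \<Rightarrow> bool" where
  "L_smooth L F \<longleftrightarrow> (\<forall>x. F differentiable (at x)) \<and>
     (\<forall>x y. norm (grad F x - grad F y) \<le> L * norm (x - y))"

definition C1 :: "('a::euclidean_space \<Rightarrow> real) \<Rightarrow> bool" where
  "C1 F \<longleftrightarrow> (\<forall>x. F differentiable (at x)) \<and> continuous_on UNIV (grad F)"

definition epi :: "('a \<Rightarrow> ereal) \<Rightarrow> ('a \<times> real) set" where
  "epi r = {(x, t). r x \<le> ereal t}"

definition proper_closed_convex :: "('a::euclidean_space \<Rightarrow> ereal) \<Rightarrow> bool" where
  "proper_closed_convex r \<longleftrightarrow>
     (\<forall>x. r x \<noteq> -\<infinity>) \<and> (\<exists>x. r x \<noteq> \<infinity>) \<and> convex (epi r) \<and> closed (epi r)"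

definition moreau :: "('a::euclidean_space \<Rightarrow> ereal) \<Rightarrow> real \<Rightarrow> 'a \<Rightarrow> real" where
  "moreau u \<delta> x = real_of_ereal (INF y. u y + ereal (\<delta> / 2 * (norm (y - x))\<^sup>2))"

end

theory Submission
  imports Defs
begin

(* The Moreau envelope M of the proper closed convex function u = f + r is convex, and
   u(y) + delta/2 |y - x|^2 is minimised at a proximal point prox x, so M has the quadratic upper
   model with slope delta (x - prox x) at x. A convex function with such a model at every point is
   differentiable with this gradient, lies above its tangents, and obeys the descent bound
   M y <= M z + <grad M z, y - z> + delta/2 |y - z|^2.
   The iterate x_(k+1) = z_k - (grad M z_k + e_k)/delta is an inexact gradient step, so the descent
   bound controls M x_(k+1) by M z_k. The choice of zeta_0 gives zeta_(k+1) = delta alpha_k^2, and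
   the extrapolation keeps z_k a weighted average of x_k and v_k. With these two identities the
   tangent bound at z_k, applied to x_k, turns the recursion for the minimum value of psi into the
   required bound by induction on k, the term mu_M/2 |z_k - v_k|^2 being nonnegative. *)

lemma norm_convex_combination_square:
  fixes p q :: "'a::real_inner"
  shows "(norm ((1 - t) *\<^sub>R p + t *\<^sub>R q))\<^sup>2
     = (1 - t) * (norm p)\<^sup>2 + t * (norm q)\<^sup>2 - t * (1 - t) * (norm (p - q))\<^sup>2"
  unfolding power2_norm_eq_inner
  by (simp add: inner_add_left inner_add_right inner_diff_left inner_diff_right inner_commute[of q p]
      field_simps)

lemma norm_convex_combination_square_le:
  fixes p q :: "'a::real_inner"
  assumes "0 \<le> t" "t \<le> 1"
  shows "(norm ((1 - t) *\<^sub>R p + t *\<^sub>R q))\<^sup>2 \<le> (1 - t) * (norm p)\<^sup>2 + t * (norm q)\<^sup>2"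
  using assms by (simp add: norm_convex_combination_square)

lemma convex_upper_quadratic_imp_lower:
  fixes f :: "'a::real_inner \<Rightarrow> real"
  assumes "convex_on UNIV f" and upper: "\<And>h. f (x + h) \<le> f x + inner p h + c * (norm h)\<^sup>2"
  shows "f x + inner p h - c * (norm h)\<^sup>2 \<le> f (x + h)"
proof -
  have "f x \<le> (1 - 1/2) * f (x + h) + (1/2) * f (x + - h)"
    using convex_onD[OF assms(1), of "1/2" "x + h" "x + - h"] scaleR_half_double[of x]
    by (simp add: algebra_simps)
  then show ?thesis using upper[of "- h"] by simp
qed

lemma quadratic_approximation_imp_gderiv:
  fixes f :: "'a::real_inner \<Rightarrow> real"
  assumes "c > 0" and approx: "\<And>h. \<bar>f (x + h) - f x - inner p h\<bar> \<le> c * (norm h)\<^sup>2"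
  shows "GDERIV f x :> p"
  unfolding gderiv_def has_derivative_at_alt
proof (intro conjI allI impI)
  show "bounded_linear (\<lambda>h. inner h p)" by (rule bounded_linear_inner_left)
  fix \<epsilon> :: real assume "0 < \<epsilon>"
  show "\<exists>d>0. \<forall>y. norm (y - x) < d \<longrightarrow> norm (f y - f x - inner (y - x) p) \<le> \<epsilon> * norm (y - x)"
  proof (intro exI[of _ "\<epsilon> / c"] conjI allI impI)
    show "0 < \<epsilon> / c" using \<open>0 < \<epsilon>\<close> \<open>c > 0\<close> by simp
    fix y assume "norm (y - x) < \<epsilon> / c"
    then have "c * norm (y - x) * norm (y - x) \<le> \<epsilon> * norm (y - x)"
      using \<open>c > 0\<close> by (intro mult_right_mono) (auto simp: field_simps)
    then show "norm (f y - f x - inner (y - x) p) \<le> \<epsilon> * norm (y - x)"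
      using approx[of "y - x"] by (simp add: inner_commute power2_eq_square mult.assoc)
  qed
qed

lemma convex_upper_quadratic_imp_above_tangent:
  fixes f :: "'a::real_inner \<Rightarrow> real"
  assumes convex: "convex_on UNIV f" and upper: "\<And>h. f (x + h) \<le> f x + inner p h + c * (norm h)\<^sup>2"
  shows "f x + inner p (y - x) \<le> f y"
proof -
  define h where "h = y - x"
  have "- (c * (norm h)\<^sup>2) * t \<le> f y - f x - inner p h" if "0 < t" "t < 1" for t
  proof -
    have "f x + inner p (t *\<^sub>R h) - c * (norm (t *\<^sub>R h))\<^sup>2 \<le> f (x + t *\<^sub>R h)"
      by (rule convex_upper_quadratic_imp_lower[OF convex upper])
    also have "\<dots> \<le> (1 - t) * f x + t * f y"
      using convex_onD[OF convex, of t x y] that by (simp add: h_def algebra_simps)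
    finally have "t * (- (c * (norm h)\<^sup>2) * t) \<le> t * (f y - f x - inner p h)"
      by (simp add: algebra_simps power2_eq_square)
    then show ?thesis using that(1) by (rule mult_left_le_imp_le)
  qed
  then have "eventually (\<lambda>t. - (c * (norm h)\<^sup>2) * t \<le> f y - f x - inner p h) (at_right 0)"
    unfolding eventually_at_right_field by (intro exI[of _ 1]) auto
  moreover have "((\<lambda>t. - (c * (norm h)\<^sup>2) * t) \<longlongrightarrow> 0) (at_right 0)"
    by (intro tendsto_eq_intros) auto
  ultimately have "0 \<le> f y - f x - inner p h"
    by (intro tendsto_le[OF _ tendsto_const]) auto
  then show ?thesis by (simp add: h_def)
qed

lemma grad_eqI:
  fixes f :: "'a::euclidean_space \<Rightarrow> real"
  assumes "GDERIV f x :> p"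
  shows "grad f x = p"
proof -
  have "GDERIV f x :> grad f x"
    unfolding grad_def using assms by (rule someI)
  then have "(\<lambda>h. inner h (grad f x)) = (\<lambda>h. inner h p)"
    using assms unfolding gderiv_def by (rule has_derivative_unique)
  then have "inner (grad f x - p) (grad f x) = inner (grad f x - p) p" by metis
  then have "inner (grad f x - p) (grad f x - p) = 0" by (simp add: inner_diff_right)
  then show ?thesis by simp
qed

lemma minimizing_sequence_Cauchy:
  fixes \<phi> :: "'a::real_normed_vector \<Rightarrow> real"
  assumes "c > 0"
    and midpoint: "\<And>p q. p \<in> D \<Longrightarrow> q \<in> D \<Longrightarrow> (1/2) *\<^sub>R p + (1/2) *\<^sub>R q \<in> D
          \<and> \<phi> ((1/2) *\<^sub>R p + (1/2) *\<^sub>R q) \<le> (\<phi> p + \<phi> q) / 2 - c * (norm (p - q))\<^sup>2"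
    and lower: "\<And>y. y \<in> D \<Longrightarrow> I \<le> \<phi> y"
    and ys: "\<And>n. ys n \<in> D" "\<And>n. \<phi> (ys n) \<le> I + \<rho> n" and "\<rho> \<longlonglongrightarrow> 0"
  shows "Cauchy ys"
proof (rule CauchyI)
  fix \<epsilon> :: real assume "0 < \<epsilon>"
  then have "eventually (\<lambda>n. \<rho> n < c * \<epsilon>\<^sup>2) sequentially"
    using \<open>c > 0\<close> \<open>\<rho> \<longlonglongrightarrow> 0\<close> by (intro order_tendstoD(2)) auto
  then obtain N where N: "\<And>n. n \<ge> N \<Longrightarrow> \<rho> n < c * \<epsilon>\<^sup>2"
    by (auto simp: eventually_sequentially)
  have "norm (ys n - ys k) < \<epsilon>" if "n \<ge> N" "k \<ge> N" for n k
  proof -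
    have "I \<le> (\<phi> (ys n) + \<phi> (ys k)) / 2 - c * (norm (ys n - ys k))\<^sup>2"
      using midpoint[OF ys(1) ys(1)] lower by (meson order_trans)
    then have "c * (norm (ys n - ys k))\<^sup>2 \<le> (\<rho> n + \<rho> k) / 2"
      using ys(2)[of n] ys(2)[of k] by argo
    also have "\<dots> < c * \<epsilon>\<^sup>2"
      using N[OF that(1)] N[OF that(2)] by argo
    finally have "c * (norm (ys n - ys k))\<^sup>2 < c * \<epsilon>\<^sup>2" .
    then show ?thesis
      using \<open>c > 0\<close> \<open>\<epsilon> > 0\<close> by (simp add: power_less_imp_less_base)
  qed
  then show "\<exists>M. \<forall>m\<ge>M. \<forall>n\<ge>M. norm (ys m - ys n) < \<epsilon>" by blast
qed

lemma midpoint_strongly_convex_minimizing_sequence: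
  fixes \<phi> :: "'a::real_normed_vector \<Rightarrow> real"
  assumes "c > 0"
    and midpoint: "\<And>p q. p \<in> D \<Longrightarrow> q \<in> D \<Longrightarrow> (1/2) *\<^sub>R p + (1/2) *\<^sub>R q \<in> D
          \<and> \<phi> ((1/2) *\<^sub>R p + (1/2) *\<^sub>R q) \<le> (\<phi> p + \<phi> q) / 2 - c * (norm (p - q))\<^sup>2"
    and "D \<noteq> {}" "bdd_below (\<phi> ` D)"
  obtains ys where "\<And>n. ys n \<in> D" "Cauchy ys" "(\<lambda>n. \<phi> (ys n)) \<longlonglongrightarrow> Inf (\<phi> ` D)"
proof -
  let ?I = "Inf (\<phi> ` D)"
  have lower: "?I \<le> \<phi> y" if "y \<in> D" for y
    using \<open>bdd_below _\<close> that by (simp add: cInf_lower)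
  have "\<exists>y\<in>D. \<phi> y < ?I + inverse (Suc n)" for n
    using cInf_lessD[of "\<phi> ` D" "?I + inverse (Suc n)"] \<open>D \<noteq> {}\<close> by auto
  then obtain ys where ys: "\<And>n. ys n \<in> D" "\<And>n. \<phi> (ys n) \<le> ?I + inverse (Suc n)"
    by (metis less_imp_le)
  have "Cauchy ys"
    by (rule minimizing_sequence_Cauchy[OF \<open>c > 0\<close> midpoint lower ys LIMSEQ_inverse_real_of_nat])
  moreover have "(\<lambda>n. \<phi> (ys n)) \<longlonglongrightarrow> ?I"
  proof (rule tendsto_sandwich[of "\<lambda>n. ?I" _ _ "\<lambda>n. ?I + inverse (Suc n)"])
    show "(\<lambda>n. ?I + inverse (Suc n)) \<longlonglongrightarrow> ?I"
      using tendsto_add[OF tendsto_const LIMSEQ_inverse_real_of_nat] by simp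
  qed (use lower ys in auto)
  ultimately show ?thesis using ys(1) that by blast
qed

lemma strongly_convex_imp_convex_on:
  fixes F :: "'a::euclidean_space \<Rightarrow> real"
  assumes "\<mu> \<ge> 0" "strongly_convex \<mu> F"
  shows "convex_on UNIV F"
proof (rule convex_onI)
  fix t :: real and x y :: 'a assume t: "0 < t" "t < 1"
  then have "F ((1 - t) *\<^sub>R x + t *\<^sub>R y) \<le> (1 - t) * F x + t * F y - \<mu> / 2 * t * (1 - t) * (norm (x - y))\<^sup>2"
    using assms(2) unfolding strongly_convex_def by simp
  moreover have "0 \<le> \<mu> / 2 * t * (1 - t) * (norm (x - y))\<^sup>2"
    using assms(1) t by simp
  ultimately show "F ((1 - t) *\<^sub>R x + t *\<^sub>R y) \<le> (1 - t) * F x + t * F y" by linarith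
qed simp

lemma epi_iff: "(y, t) \<in> epi u \<longleftrightarrow> u y \<le> ereal t"
  by (simp add: epi_def)

lemma proper_closed_convex_finite:
  assumes "proper_closed_convex u" "u y \<noteq> \<infinity>"
  shows "u y = ereal (real_of_ereal (u y))"
  using assms by (cases "u y") (auto simp: proper_closed_convex_def)

lemma proper_closed_convex_affine_minorant:
  fixes u :: "'a::euclidean_space \<Rightarrow> ereal"
  assumes "proper_closed_convex u"
  obtains a b where "\<And>y. ereal (inner a y + b) \<le> u y"
proof -
  from assms obtain x0 where x0: "u x0 \<noteq> \<infinity>" and nm: "\<And>x. u x \<noteq> -\<infinity>"
    and cv: "convex (epi u)" and cl: "closed (epi u)"
    unfolding proper_closed_convex_def by blast
  define t0 where "t0 = real_of_ereal (u x0)"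
  have t0: "u x0 = ereal t0"
    using proper_closed_convex_finite[OF assms x0] by (simp add: t0_def)
  have "(x0, t0 - 1) \<notin> epi u" by (simp add: epi_iff t0)
  from separating_hyperplane_closed_point[OF cv cl this]
  obtain A c where A: "inner A (x0, t0 - 1) < c" "\<forall>p\<in>epi u. inner A p > c" by blast
  obtain a \<beta> where A_eq: "A = (a, \<beta>)" by fastforce
  have below: "inner a x0 + \<beta> * (t0 - 1) < c" using A(1) A_eq by simp
  have above: "inner a y + \<beta> * t > c" if "u y \<le> ereal t" for y t
    using bspec[OF A(2), of "(y, t)"] that A_eq by (simp add: epi_iff)
  have "\<beta> > 0"
    using below above[of x0 t0] by (simp add: t0 algebra_simps)
  have "ereal (inner (- (1 / \<beta>) *\<^sub>R a) y + c / \<beta>) \<le> u y" for y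
  proof (cases "u y")
    case (real s)
    then have "inner a y + \<beta> * s > c" by (intro above) simp
    then show ?thesis using real \<open>\<beta> > 0\<close> by (simp add: field_simps)
  qed (use nm in auto)
  then show ?thesis by (rule that)
qed

lemma proper_closed_convex_combination:
  assumes "proper_closed_convex u" "u y1 \<le> ereal t1" "u y2 \<le> ereal t2" "0 \<le> s" "s \<le> 1"
  shows "u ((1 - s) *\<^sub>R y1 + s *\<^sub>R y2) \<le> ereal ((1 - s) * t1 + s * t2)"
proof -
  have "convex (epi u)" using assms(1) unfolding proper_closed_convex_def by blast
  moreover have "(y1, t1) \<in> epi u" "(y2, t2) \<in> epi u" using assms(2,3) by (simp_all add: epi_iff)
  ultimately have "(1 - s) *\<^sub>R (y1, t1) + s *\<^sub>R (y2, t2) \<in> epi u"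
    using assms(4,5) unfolding convex_alt by blast
  then show ?thesis by (simp add: epi_iff)
qed

lemma proper_closed_convex_limit:
  assumes "proper_closed_convex u" "\<And>n. u (y n) \<le> ereal (t n)" "y \<longlonglongrightarrow> y0" "t \<longlonglongrightarrow> t0"
  shows "u y0 \<le> ereal t0"
proof -
  have cl: "closed (epi u)" using assms(1) unfolding proper_closed_convex_def by blast
  have lim: "(\<lambda>n. (y n, t n)) \<longlonglongrightarrow> (y0, t0)" using assms(3,4) by (rule tendsto_Pair)
  have "(y0, t0) \<in> epi u"
    by (rule closed_sequentially[OF cl _ lim]) (simp add: epi_iff assms(2))
  then show ?thesis by (simp add: epi_iff)
qed

lemma proper_closed_convex_add:
  fixes F :: "'a::euclidean_space \<Rightarrow> real"
  assumes F: "convex_on UNIV F" "\<And>x. isCont F x" and r: "proper_closed_convex r"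
  shows "proper_closed_convex (\<lambda>y. ereal (F y) + r y)"
proof -
  have epi_add: "epi (\<lambda>y. ereal (F y) + r y) = (\<lambda>(y, t). (y, t - F y)) -` epi r"
  proof -
    have "ereal a + b \<le> ereal t \<longleftrightarrow> b \<le> ereal (t - a)" for a t and b :: ereal
      by (cases b) auto
    then show ?thesis by (auto simp: epi_def)
  qed
  have "convex (epi (\<lambda>y. ereal (F y) + r y))"
    unfolding convex_alt
  proof (clarify)
    fix y1 t1 y2 t2 and s :: real
    assume "(y1, t1) \<in> epi (\<lambda>y. ereal (F y) + r y)" "(y2, t2) \<in> epi (\<lambda>y. ereal (F y) + r y)"
      and s: "0 \<le> s" "s \<le> 1"
    then have "r ((1 - s) *\<^sub>R y1 + s *\<^sub>R y2) \<le> ereal ((1 - s) * (t1 - F y1) + s * (t2 - F y2))"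
      by (intro proper_closed_convex_combination[OF r]) (auto simp: epi_add epi_iff)
    moreover have "F ((1 - s) *\<^sub>R y1 + s *\<^sub>R y2) \<le> (1 - s) * F y1 + s * F y2"
      using convex_onD[OF F(1)] s by simp
    ultimately have "r ((1 - s) *\<^sub>R y1 + s *\<^sub>R y2)
        \<le> ereal (((1 - s) * t1 + s * t2) - F ((1 - s) *\<^sub>R y1 + s *\<^sub>R y2))"
      by (elim order_trans) (simp add: algebra_simps)
    then show "(1 - s) *\<^sub>R (y1, t1) + s *\<^sub>R (y2, t2) \<in> epi (\<lambda>y. ereal (F y) + r y)"
      by (simp add: epi_add epi_iff)
  qed
  moreover have "closed (epi (\<lambda>y. ereal (F y) + r y))"
    unfolding epi_add using r F(2) unfolding proper_closed_convex_def
    by (intro continuous_closed_vimage)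
      (auto simp: case_prod_unfold intro!: continuous_intros isCont_o2[where f = fst and g = F])
  ultimately show ?thesis
    using r by (auto simp: proper_closed_convex_def)
qed

lemma proper_closed_convex_quadratic_lower_bound:
  fixes u :: "'a::euclidean_space \<Rightarrow> ereal"
  assumes "proper_closed_convex u" "\<delta> > 0"
  obtains c where "\<And>y. ereal c \<le> u y + ereal (\<delta> / 2 * (norm (y - x))\<^sup>2)"
proof -
  obtain a b where ab: "\<And>y. ereal (inner a y + b) \<le> u y"
    using proper_closed_convex_affine_minorant[OF assms(1)] by blast
  define c where "c = inner a x + b - (norm a)\<^sup>2 / (2 * \<delta>)"
  have "c \<le> inner a y + b + \<delta> / 2 * (norm (y - x))\<^sup>2" for y
  proof -
    have "- inner a (y - x) \<le> norm a * norm (y - x)"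
      using norm_cauchy_schwarz[of "-a" "y - x"] by simp
    moreover have "0 \<le> (\<delta> * norm (y - x) - norm a)\<^sup>2 / (2 * \<delta>)"
      using assms(2) by simp
    moreover have "(\<delta> * norm (y - x) - norm a)\<^sup>2 / (2 * \<delta>)
        = \<delta> / 2 * (norm (y - x))\<^sup>2 - norm a * norm (y - x) + (norm a)\<^sup>2 / (2 * \<delta>)"
      using assms(2) by (simp add: power2_eq_square field_simps)
    ultimately show ?thesis
      unfolding c_def by (simp add: inner_diff_right)
  qed
  then have "ereal c \<le> ereal (inner a y + b) + ereal (\<delta> / 2 * (norm (y - x))\<^sup>2)" for y
    by simp
  then have "ereal c \<le> u y + ereal (\<delta> / 2 * (norm (y - x))\<^sup>2)" for y
    using add_right_mono[OF ab[of y]] by (rule order_trans)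
  then show ?thesis by (rule that)
qed

lemma proper_closed_convex_midpoint:
  fixes u :: "'a::euclidean_space \<Rightarrow> ereal"
  assumes pcc: "proper_closed_convex u" and "u p \<noteq> \<infinity>" "u q \<noteq> \<infinity>"
  defines "m \<equiv> (1/2) *\<^sub>R p + (1/2) *\<^sub>R q"
  shows "u m \<noteq> \<infinity>"
    and "real_of_ereal (u m) + \<delta> / 2 * (norm (m - x))\<^sup>2
      \<le> ((real_of_ereal (u p) + \<delta> / 2 * (norm (p - x))\<^sup>2)
          + (real_of_ereal (u q) + \<delta> / 2 * (norm (q - x))\<^sup>2)) / 2 - \<delta> / 8 * (norm (p - q))\<^sup>2"
proof -
  have "u ((1 - 1/2) *\<^sub>R p + (1/2) *\<^sub>R q) \<le> ereal ((1 - 1/2) * real_of_ereal (u p) + (1/2) * real_of_ereal (u q))"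
    using assms
    by (intro proper_closed_convex_combination[OF pcc] proper_closed_convex_finite[OF pcc, THEN eq_refl]) auto
  then have um: "u m \<le> ereal ((real_of_ereal (u p) + real_of_ereal (u q)) / 2)"
    by (simp add: m_def field_simps)
  then show fin: "u m \<noteq> \<infinity>" by auto
  have um_real: "real_of_ereal (u m) \<le> (real_of_ereal (u p) + real_of_ereal (u q)) / 2"
    using um proper_closed_convex_finite[OF pcc fin] by (metis ereal_less_eq(3))
  have "m - x = (1 - 1/2) *\<^sub>R (p - x) + (1/2) *\<^sub>R (q - x)"
    using scaleR_half_double[of x] by (simp add: m_def algebra_simps)
  then have norm_m: "(norm (m - x))\<^sup>2 = ((norm (p - x))\<^sup>2 + (norm (q - x))\<^sup>2) / 2 - (norm (p - q))\<^sup>2 / 4"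
    by (simp only: norm_convex_combination_square) (simp add: field_simps)
  show "real_of_ereal (u m) + \<delta> / 2 * (norm (m - x))\<^sup>2
      \<le> ((real_of_ereal (u p) + \<delta> / 2 * (norm (p - x))\<^sup>2)
          + (real_of_ereal (u q) + \<delta> / 2 * (norm (q - x))\<^sup>2)) / 2 - \<delta> / 8 * (norm (p - q))\<^sup>2"
    using um_real unfolding norm_m by (simp add: algebra_simps add_divide_distrib)
qed

lemma proper_closed_convex_prox_exists:
  fixes u :: "'a::euclidean_space \<Rightarrow> ereal"
  assumes pcc: "proper_closed_convex u" and "\<delta> > 0"
  shows "\<exists>y. \<forall>w. u y + ereal (\<delta> / 2 * (norm (y - x))\<^sup>2) \<le> u w + ereal (\<delta> / 2 * (norm (w - x))\<^sup>2)"
proof -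
  define D where "D = {y. u y \<noteq> \<infinity>}"
  define \<phi> where "\<phi> y = real_of_ereal (u y) + \<delta> / 2 * (norm (y - x))\<^sup>2" for y
  let ?I = "Inf (\<phi> ` D)"
  have \<phi>: "u y + ereal (\<delta> / 2 * (norm (y - x))\<^sup>2) = ereal (\<phi> y)" if "y \<in> D" for y
    using proper_closed_convex_finite[OF pcc, of y] that
    by (metis D_def \<phi>_def mem_Collect_eq plus_ereal.simps(1))
  obtain c where c: "\<And>y. ereal c \<le> u y + ereal (\<delta> / 2 * (norm (y - x))\<^sup>2)"
    using proper_closed_convex_quadratic_lower_bound[OF assms] by blast
  then have "bdd_below (\<phi> ` D)"
    using \<phi> by (intro bdd_belowI[of _ c]) (metis ereal_less_eq(3) imageE)
  then have I_le: "?I \<le> \<phi> y" if "y \<in> D" for y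
    using that by (simp add: cInf_lower)
  have "D \<noteq> {}" using pcc by (auto simp: D_def proper_closed_convex_def)
  have mid: "(1/2) *\<^sub>R p + (1/2) *\<^sub>R q \<in> D
      \<and> \<phi> ((1/2) *\<^sub>R p + (1/2) *\<^sub>R q) \<le> (\<phi> p + \<phi> q) / 2 - \<delta> / 8 * (norm (p - q))\<^sup>2"
    if "p \<in> D" "q \<in> D" for p q
    using proper_closed_convex_midpoint(1)[OF pcc] that
      proper_closed_convex_midpoint(2)[OF pcc, where \<delta> = \<delta> and x = x]
    by (simp add: D_def \<phi>_def)
  have "\<delta> / 8 > 0" using \<open>\<delta> > 0\<close> by simp
  then obtain ys where ys: "\<And>n. ys n \<in> D" "Cauchy ys" "(\<lambda>n. \<phi> (ys n)) \<longlonglongrightarrow> ?I"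
    by (rule midpoint_strongly_convex_minimizing_sequence[OF _ mid \<open>D \<noteq> {}\<close> \<open>bdd_below _\<close>])
      (assumption | rule that)+
  then obtain y0 where y0: "ys \<longlonglongrightarrow> y0" using Cauchy_convergent_iff convergent_def by blast
  have "u y0 \<le> ereal (?I - \<delta> / 2 * (norm (y0 - x))\<^sup>2)"
  proof (rule proper_closed_convex_limit[OF pcc _ y0])
    show "(\<lambda>n. \<phi> (ys n) - \<delta> / 2 * (norm (ys n - x))\<^sup>2) \<longlonglongrightarrow> ?I - \<delta> / 2 * (norm (y0 - x))\<^sup>2"
      by (intro tendsto_intros ys(3) y0)
    show "u (ys n) \<le> ereal (\<phi> (ys n) - \<delta> / 2 * (norm (ys n - x))\<^sup>2)" for n
      using proper_closed_convex_finite[OF pcc, of "ys n"] ys(1)[of n] by (simp add: D_def \<phi>_def)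
  qed
  then have y0_min: "u y0 + ereal (\<delta> / 2 * (norm (y0 - x))\<^sup>2) \<le> ereal ?I"
    by (cases "u y0") auto
  have "u y0 + ereal (\<delta> / 2 * (norm (y0 - x))\<^sup>2) \<le> u w + ereal (\<delta> / 2 * (norm (w - x))\<^sup>2)" for w
  proof (cases "w \<in> D")
    case True
    then show ?thesis using y0_min I_le[OF True] \<phi>[OF True] by (metis ereal_less_eq(3) order_trans)
  qed (simp add: D_def)
  then show ?thesis by blast
qed

definition prox :: "('a::real_normed_vector \<Rightarrow> ereal) \<Rightarrow> real \<Rightarrow> 'a \<Rightarrow> 'a" where
  "prox u \<delta> x = (SOME y. \<forall>w. u y + ereal (\<delta> / 2 * (norm (y - x))\<^sup>2) \<le> u w + ereal (\<delta> / 2 * (norm (w - x))\<^sup>2))"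

context
  fixes u :: "'a::euclidean_space \<Rightarrow> ereal" and \<delta> :: real
  assumes pcc: "proper_closed_convex u" and delta_pos: "\<delta> > 0"
begin

lemma prox_le:
  "u (prox u \<delta> x) + ereal (\<delta> / 2 * (norm (prox u \<delta> x - x))\<^sup>2) \<le> u w + ereal (\<delta> / 2 * (norm (w - x))\<^sup>2)"
  using someI_ex[OF proper_closed_convex_prox_exists[OF pcc delta_pos, of x]] by (simp add: prox_def)

lemma prox_finite: "u (prox u \<delta> x) = ereal (real_of_ereal (u (prox u \<delta> x)))"
proof -
  obtain w where "u w \<noteq> \<infinity>" using pcc by (auto simp: proper_closed_convex_def)
  then have "u (prox u \<delta> x) \<noteq> \<infinity>" using prox_le[of x w] by auto
  then show ?thesis by (rule proper_closed_convex_finite[OF pcc])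
qed

lemma moreau_prox:
  "moreau u \<delta> x = real_of_ereal (u (prox u \<delta> x)) + \<delta> / 2 * (norm (prox u \<delta> x - x))\<^sup>2"
proof -
  have "(INF y. u y + ereal (\<delta> / 2 * (norm (y - x))\<^sup>2)) = u (prox u \<delta> x) + ereal (\<delta> / 2 * (norm (prox u \<delta> x - x))\<^sup>2)"
    by (intro antisym INF_lower INF_greatest prox_le) simp
  also have "\<dots> = ereal (real_of_ereal (u (prox u \<delta> x)) + \<delta> / 2 * (norm (prox u \<delta> x - x))\<^sup>2)"
    by (subst prox_finite) simp
  finally show ?thesis by (simp add: moreau_def)
qed

lemma moreau_le:
  assumes "u w \<le> ereal t"
  shows "moreau u \<delta> x \<le> t + \<delta> / 2 * (norm (w - x))\<^sup>2"
proof -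
  have "ereal (moreau u \<delta> x) \<le> u w + ereal (\<delta> / 2 * (norm (w - x))\<^sup>2)"
    using prox_le[of x w] by (subst (asm) prox_finite) (simp add: moreau_prox)
  also have "\<dots> \<le> ereal (t + \<delta> / 2 * (norm (w - x))\<^sup>2)"
    using add_right_mono[OF assms, of "ereal (\<delta> / 2 * (norm (w - x))\<^sup>2)"] by simp
  finally show ?thesis by simp
qed

lemma convex_on_moreau: "convex_on UNIV (moreau u \<delta>)"
proof (rule convex_onI)
  fix t :: real and a b :: 'a
  assume t: "0 < t" "t < 1"
  let ?p = "prox u \<delta> a" and ?q = "prox u \<delta> b"
  let ?w = "(1 - t) *\<^sub>R ?p + t *\<^sub>R ?q"
  have "u ?w \<le> ereal ((1 - t) * real_of_ereal (u ?p) + t * real_of_ereal (u ?q))"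
    using t by (intro proper_closed_convex_combination[OF pcc] prox_finite[THEN eq_refl]) auto
  then have "moreau u \<delta> ((1 - t) *\<^sub>R a + t *\<^sub>R b)
      \<le> (1 - t) * real_of_ereal (u ?p) + t * real_of_ereal (u ?q)
        + \<delta> / 2 * (norm ((1 - t) *\<^sub>R (?p - a) + t *\<^sub>R (?q - b)))\<^sup>2"
    by (rule moreau_le[THEN order_trans]) (simp add: algebra_simps)
  also have "\<dots> \<le> (1 - t) * real_of_ereal (u ?p) + t * real_of_ereal (u ?q)
        + \<delta> / 2 * ((1 - t) * (norm (?p - a))\<^sup>2 + t * (norm (?q - b))\<^sup>2)"
    using t delta_pos by (intro add_left_mono mult_left_mono norm_convex_combination_square_le) auto
  also have "\<dots> = (1 - t) * moreau u \<delta> a + t * moreau u \<delta> b"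
    by (simp add: moreau_prox field_simps)
  finally show "moreau u \<delta> ((1 - t) *\<^sub>R a + t *\<^sub>R b) \<le> (1 - t) * moreau u \<delta> a + t * moreau u \<delta> b" .
qed simp

lemma moreau_upper_quadratic:
  "moreau u \<delta> (x + h) \<le> moreau u \<delta> x + inner (\<delta> *\<^sub>R (x - prox u \<delta> x)) h + \<delta> / 2 * (norm h)\<^sup>2"
proof -
  let ?p = "prox u \<delta> x"
  have "moreau u \<delta> (x + h) \<le> real_of_ereal (u ?p) + \<delta> / 2 * (norm (?p - (x + h)))\<^sup>2"
    by (rule moreau_le) (subst prox_finite, simp)
  also have "\<dots> = moreau u \<delta> x + inner (\<delta> *\<^sub>R (x - ?p)) h + \<delta> / 2 * (norm h)\<^sup>2"
    unfolding moreau_prox power2_norm_eq_inner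
    by (simp add: inner_diff_left inner_diff_right inner_add_right inner_commute algebra_simps)
  finally show ?thesis .
qed

lemma grad_moreau: "grad (moreau u \<delta>) x = \<delta> *\<^sub>R (x - prox u \<delta> x)"
proof (rule grad_eqI, rule quadratic_approximation_imp_gderiv[of "\<delta> / 2"])
  fix h
  show "\<bar>moreau u \<delta> (x + h) - moreau u \<delta> x - inner (\<delta> *\<^sub>R (x - prox u \<delta> x)) h\<bar> \<le> \<delta> / 2 * (norm h)\<^sup>2"
    unfolding abs_le_iff
    using moreau_upper_quadratic[of x h]
      convex_upper_quadratic_imp_lower[OF convex_on_moreau
        moreau_upper_quadratic, of x h]
    by argo
qed (use delta_pos in simp)

lemma moreau_above_tangent: "moreau u \<delta> z + inner (grad (moreau u \<delta>) z) (y - z) \<le> moreau u \<delta> y"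
  unfolding grad_moreau
  by (rule convex_upper_quadratic_imp_above_tangent[OF convex_on_moreau
        moreau_upper_quadratic])

lemma moreau_descent:
  "moreau u \<delta> y \<le> moreau u \<delta> z + inner (grad (moreau u \<delta>) z) (y - z) + \<delta> / 2 * (norm (y - z))\<^sup>2"
  using moreau_upper_quadratic[of z "y - z"] by (simp add: grad_moreau)

end

locale inexact_estimate_sequence =
  fixes \<delta> \<mu>M :: real and M :: "'a::real_inner \<Rightarrow> real" and G :: "'a \<Rightarrow> 'a"
    and \<alpha> \<zeta> :: "nat \<Rightarrow> real"
    and xt zt e v :: "nat \<Rightarrow> 'a" and \<psi>s \<epsilon> :: "nat \<Rightarrow> real"
  assumes delta_pos: "\<delta> > 0" and muM_nonneg: "\<mu>M \<ge> 0"
    and above_tangent: "\<And>y z. M z + inner (G z) (y - z) \<le> M y"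
    and descent: "\<And>y z. M y \<le> M z + inner (G z) (y - z) + \<delta> / 2 * (norm (y - z))\<^sup>2"
    and alpha_range: "\<And>k. 0 < \<alpha> k \<and> \<alpha> k < 1"
    and alpha_Suc: "\<And>k. (\<alpha> (Suc k))\<^sup>2 = (1 - \<alpha> (Suc k)) * (\<alpha> k)\<^sup>2 + \<alpha> (Suc k) * \<mu>M / \<delta>"
    and zeta_0: "\<zeta> 0 = (\<delta> * (\<alpha> 0)\<^sup>2 - \<alpha> 0 * \<mu>M) / (1 - \<alpha> 0)"
    and zeta_0_pos: "\<zeta> 0 > 0"
    and zeta_Suc: "\<And>k. \<zeta> (Suc k) = (1 - \<alpha> k) * \<zeta> k + \<alpha> k * \<mu>M"
    and zt_0: "zt 0 = xt 0"
    and zt_Suc: "\<And>k. zt (Suc k) = xt (Suc k)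
        + (\<alpha> k * (1 - \<alpha> k) / ((\<alpha> k)\<^sup>2 + \<alpha> (Suc k))) *\<^sub>R (xt (Suc k) - xt k)"
    and e_eq: "\<And>k. e k = \<delta> *\<^sub>R (zt k - xt (Suc k)) - G (zt k)"
    and v_0: "v 0 = xt 0"
    and v_Suc: "\<And>k. v (Suc k) = ((1 - \<alpha> k) * \<zeta> k / \<zeta> (Suc k)) *\<^sub>R v k
        + (\<alpha> k * \<mu>M / \<zeta> (Suc k)) *\<^sub>R zt k - (\<alpha> k / \<zeta> (Suc k)) *\<^sub>R (G (zt k) + e k)"
    and psi_0: "\<psi>s 0 = M (xt 0)"
    and psi_Suc: "\<And>k. \<psi>s (Suc k) = (1 - \<alpha> k) * \<psi>s k + \<alpha> k * M (zt k)
        - (\<alpha> k)\<^sup>2 / (2 * \<zeta> (Suc k)) * (norm (G (zt k) + e k))\<^sup>2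
        + \<alpha> k * (1 - \<alpha> k) * \<zeta> k / \<zeta> (Suc k)
          * (inner (G (zt k) + e k) (v k - zt k) + \<mu>M / 2 * (norm (zt k - v k))\<^sup>2)"
    and eps_0: "\<epsilon> 0 = 0"
    and eps_Suc: "\<And>k. \<epsilon> (Suc k) = (1 - \<alpha> k) * \<epsilon> k + (1 - \<alpha> k) * inner (e k) (xt k - zt k)
        + inner (e k + G (zt k)) ((1 / \<delta>) *\<^sub>R e k)"
begin

lemma zeta_Suc_eq: "\<zeta> (Suc k) = \<delta> * (\<alpha> k)\<^sup>2"
proof (induction k)
  case 0
  have "1 - \<alpha> 0 \<noteq> 0" using alpha_range[of 0] by simp
  then show ?case using zeta_0 zeta_Suc[of 0] by (simp add: field_simps)
next
  case (Suc k)
  then show ?case using zeta_Suc[of "Suc k"] alpha_Suc[of k] delta_pos by (simp add: field_simps)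
qed

lemma zeta_pos: "\<zeta> k > 0"
proof (cases k)
  case (Suc j)
  then show ?thesis using alpha_range[of j] delta_pos by (simp add: zeta_Suc_eq)
qed (use zeta_0_pos in simp)

lemma inexact_gradient_eq: "G (zt k) + e k = \<delta> *\<^sub>R (zt k - xt (Suc k))"
  by (simp add: e_eq)

lemma v_Suc_eq:
  assumes inv: "\<zeta> (Suc k) *\<^sub>R (xt k - zt k) + (\<alpha> k * \<zeta> k) *\<^sub>R (v k - zt k) = 0"
  shows "v (Suc k) = xt k + (1 / \<alpha> k) *\<^sub>R (xt (Suc k) - xt k)"
proof -
  define a where "a = \<alpha> k"
  have a: "0 < a" "a < 1" using alpha_range[of k] by (auto simp: a_def)
  have z: "\<zeta> (Suc k) = \<delta> * a\<^sup>2" "\<zeta> (Suc k) = (1 - a) * \<zeta> k + a * \<mu>M"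
    using zeta_Suc_eq zeta_Suc by (auto simp: a_def)
  have "(a * \<zeta> k) *\<^sub>R (v k - zt k) = - (\<delta> * a\<^sup>2) *\<^sub>R (xt k - zt k)"
    using inv z(1) by (simp add: a_def eq_neg_iff_add_eq_0 add.commute)
  then have "((1 - a) / a) *\<^sub>R ((a * \<zeta> k) *\<^sub>R (v k - zt k)) = ((1 - a) / a) *\<^sub>R (- (\<delta> * a\<^sup>2) *\<^sub>R (xt k - zt k))"
    by simp
  then have inv': "((1 - a) * \<zeta> k) *\<^sub>R (v k - zt k) = - ((1 - a) * \<delta> * a) *\<^sub>R (xt k - zt k)"
    using a by (simp add: power2_eq_square)
  have "\<zeta> (Suc k) *\<^sub>R v (Suc k)
      = ((1 - a) * \<zeta> k) *\<^sub>R v k + (a * \<mu>M) *\<^sub>R zt k - (a * \<delta>) *\<^sub>R (zt k - xt (Suc k))"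
    using zeta_pos[of "Suc k"] by (simp add: v_Suc inexact_gradient_eq scaleR_diff_right scaleR_add_right flip: a_def)
  then have "\<zeta> (Suc k) *\<^sub>R (v (Suc k) - zt k)
      = ((1 - a) * \<zeta> k) *\<^sub>R (v k - zt k) - (a * \<delta>) *\<^sub>R (zt k - xt (Suc k))"
    by (simp add: z(2) algebra_simps)
  also have "\<dots> = (\<delta> * a\<^sup>2) *\<^sub>R (xt k - zt k) + (\<delta> * a) *\<^sub>R (xt (Suc k) - xt k)"
    unfolding inv' by (simp add: algebra_simps power2_eq_square)
  finally have "(\<delta> * a\<^sup>2) *\<^sub>R (v (Suc k) - zt k) = (\<delta> * a\<^sup>2) *\<^sub>R (xt k - zt k + (1 / a) *\<^sub>R (xt (Suc k) - xt k))"
    using a by (simp add: z(1) scaleR_add_right power2_eq_square)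
  then show ?thesis using a delta_pos by (simp add: a_def)
qed

(* z_k is the average of x_k and v_k with weights zeta_(k+1) and alpha_k zeta_k; the extrapolation
   coefficient in z_(k+1) is exactly the one that preserves this. *)
lemma estimate_sequence_invariant:
  "\<zeta> (Suc k) *\<^sub>R (xt k - zt k) + (\<alpha> k * \<zeta> k) *\<^sub>R (v k - zt k) = 0"
proof (induction k)
  case 0
  show ?case by (simp add: zt_0 v_0)
next
  case (Suc k)
  define a a' d where "a = \<alpha> k" and "a' = \<alpha> (Suc k)" and "d = xt (Suc k) - xt k"
  define c where "c = a * (1 - a) / (a\<^sup>2 + a')"
  have a: "0 < a" "a < 1" "0 < a'" using alpha_range by (auto simp: a_def a'_def)
  have "a\<^sup>2 + a' > 0" using a by (simp add: add_pos_pos)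
  then have c: "c * (a\<^sup>2 + a') = a * (1 - a)" by (simp add: c_def)
  have x: "xt (Suc k) - zt (Suc k) = (- c) *\<^sub>R d"
    by (simp add: zt_Suc c_def d_def flip: a_def a'_def)
  have v: "v (Suc k) - zt (Suc k) = (1 / a - 1 - c) *\<^sub>R d"
    using v_Suc_eq[OF Suc] by (simp add: zt_Suc algebra_simps c_def d_def flip: a_def a'_def)
  have "\<zeta> (Suc (Suc k)) * (- c) + (a' * \<zeta> (Suc k)) * (1 / a - 1 - c) = \<delta> * a' * (a * (1 - a) - c * (a\<^sup>2 + a'))"
    using a by (simp add: zeta_Suc_eq field_simps power2_eq_square flip: a_def a'_def)
  then show ?case
    by (simp add: x v c flip: a'_def scaleR_left_distrib)
qed

lemma inexact_gradient_step:
  "M (xt (Suc k)) \<le> M (zt k) - (norm (G (zt k) + e k))\<^sup>2 / (2 * \<delta>)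
     + inner (G (zt k) + e k) (e k) / \<delta>"
proof -
  define g where "g = G (zt k) + e k"
  have x: "xt (Suc k) - zt k = (- 1 / \<delta>) *\<^sub>R g"
    using delta_pos by (simp add: g_def inexact_gradient_eq)
  have "M (xt (Suc k)) \<le> M (zt k) + inner (g - e k) (xt (Suc k) - zt k) + \<delta> / 2 * (norm (xt (Suc k) - zt k))\<^sup>2"
    using descent by (simp add: g_def)
  also have "\<dots> = M (zt k) - (norm g)\<^sup>2 / (2 * \<delta>) + inner g (e k) / \<delta>"
    using delta_pos unfolding x
    by (simp add: inner_diff_left inner_diff_right inner_commute power_mult_distrib power2_norm_eq_inner field_simps power2_eq_square[of \<delta>])
  finally show ?thesis by (simp add: g_def)
qed

lemma psi_Suc_lower:
  "(1 - \<alpha> k) * \<psi>s k + \<alpha> k * M (zt k) - (norm (G (zt k) + e k))\<^sup>2 / (2 * \<delta>)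
     - (1 - \<alpha> k) * inner (G (zt k) + e k) (xt k - zt k) \<le> \<psi>s (Suc k)"
proof -
  let ?a = "\<alpha> k" and ?g = "G (zt k) + e k" and ?c = "\<alpha> k * (1 - \<alpha> k) * \<zeta> k / \<zeta> (Suc k)"
  have a: "0 < ?a" "?a < 1" using alpha_range[of k] by auto
  have "\<zeta> (Suc k) * inner ?g (xt k - zt k) + (?a * \<zeta> k) * inner ?g (v k - zt k) = 0"
    using arg_cong[OF estimate_sequence_invariant[of k], of "inner ?g"] by (simp add: inner_add_right)
  then have "(?a * \<zeta> k) * inner ?g (v k - zt k) = - (\<zeta> (Suc k) * inner ?g (xt k - zt k))"
    by linarith
  then have "(1 - ?a) / \<zeta> (Suc k) * ((?a * \<zeta> k) * inner ?g (v k - zt k))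
      = - ((1 - ?a) * inner ?g (xt k - zt k))"
    using zeta_pos[of "Suc k"] by simp
  then have cross: "?c * inner ?g (v k - zt k) = - ((1 - ?a) * inner ?g (xt k - zt k))"
    by (simp add: field_simps)
  have sq: "?a\<^sup>2 / (2 * \<zeta> (Suc k)) * (norm ?g)\<^sup>2 = (norm ?g)\<^sup>2 / (2 * \<delta>)"
    using a by (simp add: zeta_Suc_eq)
  have "0 \<le> ?c * (\<mu>M / 2 * (norm (zt k - v k))\<^sup>2)"
    using a zeta_pos[of k] zeta_pos[of "Suc k"] muM_nonneg by simp
  then show ?thesis
    unfolding psi_Suc[of k] distrib_left using cross sq by linarith
qed

lemma estimate_sequence_step:
  assumes "M (xt k) \<le> \<psi>s k + \<epsilon> k"
  shows "M (xt (Suc k)) \<le> \<psi>s (Suc k) + \<epsilon> (Suc k)"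
proof -
  have a: "0 \<le> 1 - \<alpha> k" using alpha_range[of k] by simp
  have "(1 - \<alpha> k) * (M (zt k) + inner (G (zt k)) (xt k - zt k)) \<le> (1 - \<alpha> k) * M (xt k)"
    using above_tangent a by (rule mult_left_mono)
  moreover have "(1 - \<alpha> k) * M (xt k) \<le> (1 - \<alpha> k) * (\<psi>s k + \<epsilon> k)"
    using assms a by (rule mult_left_mono)
  ultimately show ?thesis
    using inexact_gradient_step[of k] psi_Suc_lower[of k] eps_Suc[of k]
    by (simp add: algebra_simps add_divide_distrib inner_add_left inner_commute)
qed

lemma estimate_sequence_bound: "M (xt k) \<le> \<psi>s k + \<epsilon> k"
  by (induction k) (simp_all add: psi_0 eps_0 estimate_sequence_step)

end

theorem lemma10:
  fixes fi :: "nat \<Rightarrow> 'a::euclidean_space \<Rightarrow> real"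
    and r :: "'a \<Rightarrow> ereal"
    and m :: nat and \<mu> L \<delta> :: real
    and M :: "'a \<Rightarrow> real" and \<mu>M :: real
    and xt zt e v :: "nat \<Rightarrow> nat \<Rightarrow> 'a"   (* indexed: i k *)
    and \<alpha> \<zeta> :: "nat \<Rightarrow> real"
    and \<psi>s \<epsilon> :: "nat \<Rightarrow> nat \<Rightarrow> real"  (* indexed: i k *)
  assumes m_pos: "m \<ge> 1"
    and fi_C1: "\<forall>i<m. C1 (fi i)"
    and fi_convex: "\<forall>i<m. convex_on UNIV (fi i)"
    and mu_nonneg: "\<mu> \<ge> 0"
    and f_sc: "strongly_convex \<mu> (\<lambda>x. (1 / real m) * (\<Sum>i<m. fi i x))"
    and f_smooth: "L_smooth L (\<lambda>x. (1 / real m) * (\<Sum>i<m. fi i x))"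
    and r_pcc: "proper_closed_convex r"
    and delta_pos: "\<delta> > 0"
    and M_def: "M = moreau (\<lambda>y. ereal ((1 / real m) * (\<Sum>i<m. fi i y)) + r y) \<delta>"
    and muM_def: "\<mu>M = \<delta> * \<mu> / (\<delta> + \<mu>)"
    and alpha_range: "\<forall>k. 0 < \<alpha> k \<and> \<alpha> k < 1"
    and alpha_rec: "\<forall>k. (\<alpha> (Suc k))\<^sup>2 = (1 - \<alpha> (Suc k)) * (\<alpha> k)\<^sup>2 + \<alpha> (Suc k) * \<mu>M / \<delta>"
    and zeta0_def: "\<zeta> 0 = (\<delta> * (\<alpha> 0)\<^sup>2 - \<alpha> 0 * \<mu>M) / (1 - \<alpha> 0)"
    and zeta0_pos: "\<zeta> 0 > 0"
    and zeta_rec: "\<forall>k. \<zeta> (Suc k) = (1 - \<alpha> k) * \<zeta> k + \<alpha> k * \<mu>M"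
    and zt0: "\<forall>i. zt i 0 = xt i 0"
    and zt_rec: "\<forall>i k. zt i (Suc k) = xt i (Suc k)
        + (\<alpha> k * (1 - \<alpha> k) / ((\<alpha> k)\<^sup>2 + \<alpha> (Suc k))) *\<^sub>R (xt i (Suc k) - xt i k)"
    and e_def: "\<forall>i k. e i k = \<delta> *\<^sub>R (zt i k - xt i (Suc k)) - grad M (zt i k)"
    and v0: "\<forall>i. v i 0 = xt i 0"
    and v_rec: "\<forall>i k. v i (Suc k) =
        ((1 - \<alpha> k) * \<zeta> k / \<zeta> (Suc k)) *\<^sub>R v i k
        + (\<alpha> k * \<mu>M / \<zeta> (Suc k)) *\<^sub>R zt i k
        - (\<alpha> k / \<zeta> (Suc k)) *\<^sub>R (grad M (zt i k) + e i k)"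
    and psi0: "\<forall>i. \<psi>s i 0 = M (xt i 0)"
    and psi_rec: "\<forall>i k. \<psi>s i (Suc k) =
        (1 - \<alpha> k) * \<psi>s i k + \<alpha> k * M (zt i k)
        - (\<alpha> k)\<^sup>2 / (2 * \<zeta> (Suc k)) * (norm (grad M (zt i k) + e i k))\<^sup>2
        + \<alpha> k * (1 - \<alpha> k) * \<zeta> k / \<zeta> (Suc k)
          * (inner (grad M (zt i k) + e i k) (v i k - zt i k)
             + \<mu>M / 2 * (norm (zt i k - v i k))\<^sup>2)"
    and eps0: "\<forall>i. \<epsilon> i 0 = 0"
    and eps_rec: "\<forall>i k. \<epsilon> i (Suc k) =
        (1 - \<alpha> k) * \<epsilon> i k + (1 - \<alpha> k) * inner (e i k) (xt i k - zt i k)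
        + inner (e i k + grad M (zt i k)) ((1 / \<delta>) *\<^sub>R e i k)"
  shows "\<forall>k. \<forall>i<m. M (xt i k) \<le> \<psi>s i k + \<epsilon> i k"
proof -
  have "\<mu>M \<ge> 0" using muM_def mu_nonneg delta_pos by simp
  have "convex_on UNIV (\<lambda>x. (1 / real m) * (\<Sum>i<m. fi i x))"
    using strongly_convex_imp_convex_on[OF mu_nonneg f_sc] .
  moreover have "isCont (\<lambda>x. (1 / real m) * (\<Sum>i<m. fi i x)) x" for x
    using f_smooth by (simp add: L_smooth_def differentiable_imp_continuous_within)
  ultimately have pcc: "proper_closed_convex (\<lambda>y. ereal ((1 / real m) * (\<Sum>i<m. fi i y)) + r y)"
    using r_pcc by (rule proper_closed_convex_add)
  have "M (xt i k) \<le> \<psi>s i k + \<epsilon> i k" for i k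
  proof -
    interpret inexact_estimate_sequence \<delta> \<mu>M M "grad M" \<alpha> \<zeta> "xt i" "zt i" "e i" "v i" "\<psi>s i" "\<epsilon> i"
      using delta_pos \<open>\<mu>M \<ge> 0\<close> alpha_range alpha_rec zeta0_def zeta0_pos zeta_rec zt0 zt_rec e_def
        v0 v_rec psi0 psi_rec eps0 eps_rec
        moreau_above_tangent[OF pcc delta_pos] moreau_descent[OF pcc delta_pos]
      unfolding M_def by unfold_locales auto
    show ?thesis by (rule estimate_sequence_bound)
  qed
  then show ?thesis by blast
qed

end
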